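(* Let $Q$ be a finite power associative loop and let $d>1$ be an integer. (i) Suppose that $Q$ has the Cauchy property for every prime $p$ dividing $d$. If $Q$ is uniquely $d$-divisible then $|Q|$ is coprime to $d$. (ii) Suppose that $Q$ has the elementwise Lagrange property. If $|Q|$ is coprime to $d$ then $Q$ is uniquely $d$-divisible.
   Context: A loop is a magma with identity in which all left and right translations are bijections; it is power associative if every element generates a subgroup. $Q$ is uniquely $d$-divisible if $x\mapsto x^d$ is a bijection of $Q$. $Q$ has the Cauchy property for a prime $p$ if whenever $p$ divides $|Q|$ there is $x\in Q$ of order $p$. $Q$ has the elementwise Lagrange property if the order of every element divides $|Q|$. *)

theory Defs
  imports Main "HOL-Computational_Algebra.Primes"
begin

definition is_loop :: "'a set \<Rightarrow> ('a \<Rightarrow> 'a \<Rightarrow> 'a) \<Rightarrow> 'a \<Rightarrow> bool" where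
  "is_loop Q m e \<longleftrightarrow>
     (\<forall>x\<in>Q. \<forall>y\<in>Q. m x y \<in> Q) \<and> e \<in> Q \<and>
     (\<forall>x\<in>Q. m e x = x \<and> m x e = x) \<and>
     (\<forall>a\<in>Q. bij_betw (\<lambda>x. m a x) Q Q \<and> bij_betw (\<lambda>x. m x a) Q Q)"

definition ldiv :: "'a set \<Rightarrow> ('a \<Rightarrow> 'a \<Rightarrow> 'a) \<Rightarrow> 'a \<Rightarrow> 'a \<Rightarrow> 'a" where
  "ldiv Q m a b = (THE x. x \<in> Q \<and> m a x = b)"
definition rdiv :: "'a set \<Rightarrow> ('a \<Rightarrow> 'a \<Rightarrow> 'a) \<Rightarrow> 'a \<Rightarrow> 'a \<Rightarrow> 'a" where
  "rdiv Q m b a = (THE x. x \<in> Q \<and> m x a = b)"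

inductive_set subloop_gen :: "'a set \<Rightarrow> ('a \<Rightarrow> 'a \<Rightarrow> 'a) \<Rightarrow> 'a \<Rightarrow> 'a set"
  for Q m x where
  base: "x \<in> subloop_gen Q m x"
| mult: "a \<in> subloop_gen Q m x \<Longrightarrow> b \<in> subloop_gen Q m x \<Longrightarrow> m a b \<in> subloop_gen Q m x"
| ldv: "a \<in> subloop_gen Q m x \<Longrightarrow> b \<in> subloop_gen Q m x \<Longrightarrow> ldiv Q m a b \<in> subloop_gen Q m x"
| rdv: "a \<in> subloop_gen Q m x \<Longrightarrow> b \<in> subloop_gen Q m x \<Longrightarrow> rdiv Q m a b \<in> subloop_gen Q m x"

definition power_assoc :: "'a set \<Rightarrow> ('a \<Rightarrow> 'a \<Rightarrow> 'a) \<Rightarrow> bool" where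
  "power_assoc Q m \<longleftrightarrow> (\<forall>x\<in>Q. \<forall>a\<in>subloop_gen Q m x. \<forall>b\<in>subloop_gen Q m x.
      \<forall>c\<in>subloop_gen Q m x. m (m a b) c = m a (m b c))"

primrec lpow :: "('a \<Rightarrow> 'a \<Rightarrow> 'a) \<Rightarrow> 'a \<Rightarrow> 'a \<Rightarrow> nat \<Rightarrow> 'a" where
  "lpow m e x 0 = e"
| "lpow m e x (Suc n) = m (lpow m e x n) x"

definition uniquely_divisible :: "'a set \<Rightarrow> ('a \<Rightarrow> 'a \<Rightarrow> 'a) \<Rightarrow> 'a \<Rightarrow> nat \<Rightarrow> bool" where
  "uniquely_divisible Q m e d \<longleftrightarrow> bij_betw (\<lambda>x. lpow m e x d) Q Q"

definition elt_order :: "('a \<Rightarrow> 'a \<Rightarrow> 'a) \<Rightarrow> 'a \<Rightarrow> 'a \<Rightarrow> nat" where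
  "elt_order m e x = (if \<exists>n>0. lpow m e x n = e then LEAST n. n > 0 \<and> lpow m e x n = e else 0)"

definition cauchy_prop :: "'a set \<Rightarrow> ('a \<Rightarrow> 'a \<Rightarrow> 'a) \<Rightarrow> 'a \<Rightarrow> nat \<Rightarrow> bool" where
  "cauchy_prop Q m e p \<longleftrightarrow> (p dvd card Q \<longrightarrow> (\<exists>x\<in>Q. elt_order m e x = p))"

definition elementwise_lagrange :: "'a set \<Rightarrow> ('a \<Rightarrow> 'a \<Rightarrow> 'a) \<Rightarrow> 'a \<Rightarrow> bool" where
  "elementwise_lagrange Q m e \<longleftrightarrow> (\<forall>x\<in>Q. elt_order m e x dvd card Q)"

end

theory Submission
  imports Defs "HOL-Number_Theory.Cong"
begin

text \<open>In a power associative loop the powers of x are computed in the group generated by x,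
  so x^k depends only on k modulo the order of x.  For (i), an element of prime order p
  dividing d (given by the Cauchy property) is a second solution of y^d = e besides e itself.
  For (ii), if the order n of x is coprime to d, choose k with k d \<equiv> 1 (mod n); then
  (x^k)^d = x, so the d-th power map is onto, hence bijective on the finite set Q.\<close>

locale loop =
  fixes Q :: "'a set" and m :: "'a \<Rightarrow> 'a \<Rightarrow> 'a" and e :: 'a
  assumes is_loop: "is_loop Q m e"
begin

lemma closed: "a \<in> Q \<Longrightarrow> b \<in> Q \<Longrightarrow> m a b \<in> Q"
  using is_loop unfolding is_loop_def by blast

lemma unit_closed: "e \<in> Q"
  using is_loop unfolding is_loop_def by blast

lemma left_unit: "x \<in> Q \<Longrightarrow> m e x = x"
  using is_loop unfolding is_loop_def by blast

lemma right_unit: "x \<in> Q \<Longrightarrow> m x e = x"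
  using is_loop unfolding is_loop_def by blast

lemma left_cancel: "a \<in> Q \<Longrightarrow> y \<in> Q \<Longrightarrow> z \<in> Q \<Longrightarrow> m a y = m a z \<Longrightarrow> y = z"
  using is_loop unfolding is_loop_def bij_betw_def inj_on_def by blast

lemma right_cancel: "a \<in> Q \<Longrightarrow> y \<in> Q \<Longrightarrow> z \<in> Q \<Longrightarrow> m y a = m z a \<Longrightarrow> y = z"
  using is_loop unfolding is_loop_def bij_betw_def inj_on_def by blast

lemma ldiv_closed_and_cancel:
  assumes "a \<in> Q" "b \<in> Q"
  shows "ldiv Q m a b \<in> Q \<and> m a (ldiv Q m a b) = b"
proof -
  have "b \<in> (\<lambda>x. m a x) ` Q"
    using is_loop assms unfolding is_loop_def bij_betw_def by blast
  then have "\<exists>!y. y \<in> Q \<and> m a y = b"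
    using left_cancel[OF assms(1)] by blast
  then show ?thesis
    unfolding ldiv_def by (rule theI')
qed

lemma rdiv_closed_and_cancel:
  assumes "a \<in> Q" "b \<in> Q"
  shows "rdiv Q m b a \<in> Q \<and> m (rdiv Q m b a) a = b"
proof -
  have "b \<in> (\<lambda>x. m x a) ` Q"
    using is_loop assms unfolding is_loop_def bij_betw_def by blast
  then have "\<exists>!y. y \<in> Q \<and> m y a = b"
    using right_cancel[OF assms(1)] by blast
  then show ?thesis
    unfolding rdiv_def by (rule theI')
qed

lemma ldiv_self: "x \<in> Q \<Longrightarrow> ldiv Q m x x = e"
  using ldiv_closed_and_cancel[of x x] right_unit[of x] unit_closed
  by (metis left_cancel)

lemma subloop_gen_subset:
  assumes "x \<in> Q"
  shows "subloop_gen Q m x \<subseteq> Q"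
proof
  fix y assume "y \<in> subloop_gen Q m x"
  then show "y \<in> Q"
    by (induction rule: subloop_gen.induct)
      (auto simp: assms closed ldiv_closed_and_cancel rdiv_closed_and_cancel)
qed

lemma unit_in_subloop_gen: "x \<in> Q \<Longrightarrow> e \<in> subloop_gen Q m x"
  using subloop_gen.ldv[OF subloop_gen.base subloop_gen.base] ldiv_self by metis

lemma lpow_in_subloop_gen: "x \<in> Q \<Longrightarrow> lpow m e x n \<in> subloop_gen Q m x"
  by (induction n) (simp_all add: unit_in_subloop_gen subloop_gen.mult subloop_gen.base)

lemma lpow_closed: "x \<in> Q \<Longrightarrow> lpow m e x n \<in> Q"
  using lpow_in_subloop_gen subloop_gen_subset by blast

lemma lpow_one: "x \<in> Q \<Longrightarrow> lpow m e x 1 = x"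
  by (simp add: left_unit)

lemma lpow_unit: "lpow m e e n = e"
  by (induction n) (simp_all add: left_unit unit_closed)

end

locale power_assoc_loop = loop +
  assumes power_assoc: "power_assoc Q m"
begin

lemma lpow_add:
  assumes x: "x \<in> Q"
  shows "lpow m e x (a + b) = m (lpow m e x a) (lpow m e x b)"
proof (induction b)
  case 0
  then show ?case
    by (simp add: right_unit lpow_closed x)
next
  case (Suc b)
  have assoc: "\<forall>a\<in>subloop_gen Q m x. \<forall>b\<in>subloop_gen Q m x. \<forall>c\<in>subloop_gen Q m x.
      m (m a b) c = m a (m b c)"
    using power_assoc x unfolding power_assoc_def by blast
  have "lpow m e x (a + Suc b) = m (m (lpow m e x a) (lpow m e x b)) x"
    using Suc by simp
  also have "\<dots> = m (lpow m e x a) (m (lpow m e x b) x)"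
    using assoc lpow_in_subloop_gen[OF x, of a] lpow_in_subloop_gen[OF x, of b]
      subloop_gen.base[of x Q m] by blast
  finally show ?case
    by simp
qed

lemma lpow_mult:
  assumes "x \<in> Q"
  shows "lpow m e (lpow m e x a) b = lpow m e x (a * b)"
proof (induction b)
  case 0
  then show ?case
    by simp
next
  case (Suc b)
  then show ?case
    using lpow_add[OF assms, of "a * b" a] by (simp add: add.commute)
qed

end

locale finite_power_assoc_loop = power_assoc_loop +
  assumes finite: "finite Q"
begin

lemma ex_lpow_eq_unit:
  assumes "x \<in> Q"
  shows "\<exists>n>0. lpow m e x n = e"
proof -
  have "range (lpow m e x) \<subseteq> Q"
    using lpow_closed assms by blast
  then have "\<not> inj (lpow m e x)"
    using finite finite_subset finite_imageD by blast
  then obtain i j where "i \<noteq> j" "lpow m e x i = lpow m e x j"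
    unfolding inj_def by blast
  then obtain i j where ij: "i < j" "lpow m e x i = lpow m e x j"
    by (metis linorder_neqE_nat)
  then have "m (lpow m e x i) (lpow m e x (j - i)) = m (lpow m e x i) e"
    using lpow_add[OF assms, of i "j - i"] right_unit lpow_closed assms by simp
  then have "lpow m e x (j - i) = e"
    using left_cancel lpow_closed assms unit_closed by blast
  with ij show ?thesis
    by (intro exI[of _ "j - i"]) simp
qed

lemma elt_order_eq_Least:
  "x \<in> Q \<Longrightarrow> elt_order m e x = (LEAST n. n > 0 \<and> lpow m e x n = e)"
  using ex_lpow_eq_unit unfolding elt_order_def by simp

lemma elt_order_pos_and_lpow_elt_order:
  assumes "x \<in> Q"
  shows "elt_order m e x > 0 \<and> lpow m e x (elt_order m e x) = e"
proof -
  obtain n where "n > 0" "lpow m e x n = e"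
    using ex_lpow_eq_unit assms by blast
  then show ?thesis
    unfolding elt_order_eq_Least[OF assms]
    using LeastI[of "\<lambda>k. k > 0 \<and> lpow m e x k = e" n] by blast
qed

lemma elt_order_le:
  "x \<in> Q \<Longrightarrow> n > 0 \<Longrightarrow> lpow m e x n = e \<Longrightarrow> elt_order m e x \<le> n"
  by (simp add: elt_order_eq_Least Least_le)

lemma lpow_mod_elt_order:
  assumes "x \<in> Q"
  shows "lpow m e x k = lpow m e x (k mod elt_order m e x)"
proof -
  define n where "n = elt_order m e x"
  have "lpow m e x (n * (k div n)) = e"
    using lpow_mult[OF assms, of n "k div n"] elt_order_pos_and_lpow_elt_order[OF assms]
    by (simp add: n_def lpow_unit)
  have "lpow m e x k = m (lpow m e x (n * (k div n))) (lpow m e x (k mod n))"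
    using lpow_add[OF assms, of "n * (k div n)" "k mod n"] by simp
  also have "\<dots> = lpow m e x (k mod n)"
    using \<open>lpow m e x (n * (k div n)) = e\<close> left_unit lpow_closed assms by simp
  finally show ?thesis
    by (simp add: n_def)
qed

lemma lpow_eq_unit_iff_elt_order_dvd:
  assumes "x \<in> Q"
  shows "lpow m e x k = e \<longleftrightarrow> elt_order m e x dvd k"
proof
  assume "lpow m e x k = e"
  then have "lpow m e x (k mod elt_order m e x) = e"
    using lpow_mod_elt_order[OF assms] by simp
  moreover have "k mod elt_order m e x < elt_order m e x"
    using elt_order_pos_and_lpow_elt_order[OF assms] by simp
  ultimately have "k mod elt_order m e x = 0"
    using elt_order_le[OF assms] by (meson le_less_trans less_irrefl not_gr0)
  then show "elt_order m e x dvd k"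
    by (simp add: mod_eq_0_iff_dvd)
next
  assume "elt_order m e x dvd k"
  then show "lpow m e x k = e"
    using lpow_mod_elt_order[OF assms, of k] by simp
qed

lemma lpow_cong_elt_order:
  assumes "x \<in> Q" "[a = b] (mod elt_order m e x)"
  shows "lpow m e x a = lpow m e x b"
  using lpow_mod_elt_order[OF assms(1), of a] lpow_mod_elt_order[OF assms(1), of b] assms(2)
  unfolding cong_def by simp

lemma elt_order_unit: "elt_order m e e = 1"
proof -
  have "elt_order m e e dvd 1"
    using lpow_eq_unit_iff_elt_order_dvd[OF unit_closed, of 1] lpow_unit by blast
  then show ?thesis
    by simp
qed

lemma eq_unit_if_elt_order_dvd_and_inj_lpow:
  assumes "inj_on (\<lambda>y. lpow m e y d) Q" "x \<in> Q" "elt_order m e x dvd d"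
  shows "x = e"
proof -
  have "lpow m e x d = lpow m e e d"
    using lpow_eq_unit_iff_elt_order_dvd[OF assms(2)] assms(3) lpow_unit by simp
  then show ?thesis
    using inj_onD[OF assms(1)] assms(2) unit_closed by blast
qed

lemma in_lpow_image_if_coprime_elt_order:
  assumes "x \<in> Q" "coprime d (elt_order m e x)"
  shows "x \<in> (\<lambda>y. lpow m e y d) ` Q"
proof -
  obtain k where k: "[d * k = 1] (mod elt_order m e x)"
    using cong_solve_coprime_nat[OF assms(2)] by auto
  have "lpow m e (lpow m e x k) d = lpow m e x (d * k)"
    by (simp add: lpow_mult assms(1) mult.commute)
  also have "\<dots> = x"
    using lpow_cong_elt_order[OF assms(1) k] lpow_one assms(1) by simp
  finally show ?thesis
    by (rule image_eqI[where f = "\<lambda>y. lpow m e y d", OF sym lpow_closed[OF assms(1)]])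
qed

lemma coprime_card_if_cauchy_and_uniquely_divisible:
  assumes cauchy: "\<And>p. prime p \<Longrightarrow> p dvd d \<Longrightarrow> cauchy_prop Q m e p"
    and "uniquely_divisible Q m e d"
  shows "coprime (card Q) d"
proof (rule ccontr)
  have inj: "inj_on (\<lambda>y. lpow m e y d) Q"
    using \<open>uniquely_divisible Q m e d\<close> unfolding uniquely_divisible_def bij_betw_def by blast
  assume "\<not> coprime (card Q) d"
  then obtain p where "prime p" "p dvd gcd (card Q) d"
    using prime_factor_nat coprime_iff_gcd_eq_1 by blast
  then have p: "prime p" "p dvd card Q" "p dvd d"
    by simp_all
  then obtain x where x: "x \<in> Q" "elt_order m e x = p"
    using cauchy unfolding cauchy_prop_def by blast
  then have "x = e"
    using eq_unit_if_elt_order_dvd_and_inj_lpow[OF inj] p(3) by simp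
  then have "p = 1"
    using x(2) elt_order_unit by simp
  then show False
    using p(1) by simp
qed

lemma uniquely_divisible_if_lagrange_and_coprime_card:
  assumes lagrange: "elementwise_lagrange Q m e" and "coprime (card Q) d"
  shows "uniquely_divisible Q m e d"
proof -
  have "Q \<subseteq> (\<lambda>y. lpow m e y d) ` Q"
  proof
    fix x assume "x \<in> Q"
    then have "elt_order m e x dvd card Q"
      using lagrange unfolding elementwise_lagrange_def by blast
    then have "coprime d (elt_order m e x)"
      using coprime_divisors[OF dvd_refl] coprime_commute \<open>coprime (card Q) d\<close> by blast
    then show "x \<in> (\<lambda>y. lpow m e y d) ` Q"
      using in_lpow_image_if_coprime_elt_order[OF \<open>x \<in> Q\<close>] by blast
  qed
  moreover have "(\<lambda>y. lpow m e y d) ` Q \<subseteq> Q"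
    using lpow_closed by blast
  ultimately show ?thesis
    using finite_surj_inj[OF finite] unfolding uniquely_divisible_def bij_betw_def by blast
qed

end

theorem lemma1p6:
  fixes Q :: "'a set" and m :: "'a \<Rightarrow> 'a \<Rightarrow> 'a" and e :: 'a and d :: nat
  assumes "is_loop Q m e" and "finite Q" and "power_assoc Q m" and "d > 1"
  shows "((\<forall>p. prime p \<and> p dvd d \<longrightarrow> cauchy_prop Q m e p) \<longrightarrow>
            uniquely_divisible Q m e d \<longrightarrow> coprime (card Q) d)
       \<and> (elementwise_lagrange Q m e \<longrightarrow>
            coprime (card Q) d \<longrightarrow> uniquely_divisible Q m e d)"
proof -
  interpret finite_power_assoc_loop Q m e
    using assms(1-3) by unfold_locales
  show ?thesis
    using coprime_card_if_cauchy_and_uniquely_divisible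
      uniquely_divisible_if_lagrange_and_coprime_card by blast
qed

end
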